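(* Let $G$ be a cubic graph of order $2n$ with $\chi'_{[n]}(G)=4$. Then $\chi'_{[n-1]}(G)=4$.
   Context: All graphs are finite, simple (no loops, no parallel edges), connected and cubic. For a positive integer $k$, a $[k]$-matching of $G$ is a matching of $G$ with exactly $k$ edges; an $[n]$-matching in a graph of order $2n$ is a perfect matching. The excessive $[k]$-index $\chi'_{[k]}(G)$ is the minimum number of $[k]$-matchings of $G$ whose union is $E(G)$; if some edge of $G$ lies in no $[k]$-matching, one sets $\chi'_{[k]}(G)=\infty$. *)

theory Defs
  imports Main "HOL-Library.Extended_Nat"
begin

definition simple_graph :: "'a set \<Rightarrow> 'a set set \<Rightarrow> bool" where
  "simple_graph V E \<longleftrightarrow> finite V \<and>
     (\<forall>e\<in>E. \<exists>u v. u \<in> V \<and> v \<in> V \<and> u \<noteq> v \<and> e = {u, v})"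

definition degree :: "'a set set \<Rightarrow> 'a \<Rightarrow> nat" where
  "degree E v = card {e\<in>E. v \<in> e}"

definition cubic :: "'a set \<Rightarrow> 'a set set \<Rightarrow> bool" where
  "cubic V E \<longleftrightarrow> (\<forall>v\<in>V. degree E v = 3)"

definition connected_graph :: "'a set \<Rightarrow> 'a set set \<Rightarrow> bool" where
  "connected_graph V E \<longleftrightarrow>
     (\<forall>u\<in>V. \<forall>v\<in>V. (u, v) \<in> {(x, y). {x, y} \<in> E}\<^sup>*)"

definition matching :: "'a set set \<Rightarrow> 'a set set \<Rightarrow> bool" where
  "matching E M \<longleftrightarrow> M \<subseteq> E \<and> (\<forall>e\<in>M. \<forall>f\<in>M. e \<noteq> f \<longrightarrow> e \<inter> f = {})"

definition k_matching :: "'a set set \<Rightarrow> nat \<Rightarrow> 'a set set \<Rightarrow> bool" where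
  "k_matching E k M \<longleftrightarrow> matching E M \<and> finite M \<and> card M = k"

definition excessive_index :: "'a set set \<Rightarrow> nat \<Rightarrow> enat" where
  "excessive_index E k =
     (if \<forall>e\<in>E. \<exists>M. k_matching E k M \<and> e \<in> M
      then enat (LEAST t. \<exists>S. finite S \<and> card S = t \<and>
                 (\<forall>M\<in>S. k_matching E k M) \<and> \<Union>S = E)
      else \<infinity>)"

end

theory Submission
  imports Defs
begin

(* Let G be cubic of order 2n, so the [n]-matchings are exactly the
   perfect matchings.  A minimum cover of E by perfect matchings has four members
   M1,...,M4.  Any two perfect matchings meet: if A and B were disjoint, the remaining
   edges E - A - B would form a third perfect matching (every vertex has degree 3),
   giving a cover of size 3.  Moreover no edge lies in all four members, because a
   second edge at one of its endpoints must be covered by some M_i.  Choosing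
   e_i in M_i \<inter> M_(i+1) cyclically, the [n-1]-matchings M_i - {e_i} still cover E, and
   they are pairwise distinct since a perfect matching is determined by all but one
   of its edges.  Conversely, any cover of a cubic graph by matchings that are not
   perfect needs at least four members: each vertex meets three distinct members,
   and if there were only three, each of them would meet every vertex. *)

section \<open>Matchings in simple graphs\<close>

lemma simple_graph_edgeE:
  assumes "simple_graph V E" and "e \<in> E"
  obtains u v where "u \<in> V" "v \<in> V" "u \<noteq> v" "e = {u, v}"
  using assms unfolding simple_graph_def by blast

lemma simple_graph_edge_subset: "simple_graph V E \<Longrightarrow> e \<in> E \<Longrightarrow> e \<subseteq> V"
  by (erule simple_graph_edgeE) auto

lemma simple_graph_finite_edges:
  assumes "simple_graph V E"
  shows "finite E"
proof -
  have "E \<subseteq> Pow V" using simple_graph_edge_subset[OF assms] by blast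
  moreover have "finite V" using assms unfolding simple_graph_def by blast
  ultimately show ?thesis by (meson finite_Pow_iff finite_subset)
qed

lemma matching_edge_unique:
  "matching E M \<Longrightarrow> e \<in> M \<Longrightarrow> f \<in> M \<Longrightarrow> v \<in> e \<Longrightarrow> v \<in> f \<Longrightarrow> e = f"
  unfolding matching_def by blast

lemma card_Union_matching:
  assumes sg: "simple_graph V E" and m: "matching E M" and fin: "finite M"
  shows "card (\<Union>M) = 2 * card M"
proof -
  have sub: "M \<subseteq> E" using m unfolding matching_def by blast
  have card2: "card e = 2" if e: "e \<in> M" for e
  proof -
    obtain u v where "u \<noteq> v" "e = {u, v}" using simple_graph_edgeE[OF sg, of e] e sub by blast
    then show ?thesis by simp
  qed
  have "card (\<Union>M) = sum card M"
  proof (rule card_Union_disjoint)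
    show "pairwise disjnt M" using m unfolding matching_def pairwise_def disjnt_def by blast
    show "finite A" if "A \<in> M" for A using card2[OF that] card.infinite by fastforce
  qed
  also have "\<dots> = 2 * card M" using card2 by simp
  finally show ?thesis .
qed

lemma perfect_matching_covers:
  assumes sg: "simple_graph V E" and cV: "card V = 2 * n" and M: "k_matching E n M"
  shows "\<Union>M = V"
proof -
  have m: "matching E M" "finite M" "card M = n" using M unfolding k_matching_def by auto
  have sub: "\<Union>M \<subseteq> V" using m(1) simple_graph_edge_subset[OF sg] unfolding matching_def by blast
  have "card (\<Union>M) = card V" using card_Union_matching[OF sg m(1,2)] m(3) cV by simp
  moreover have "finite V" using sg unfolding simple_graph_def by blast
  ultimately show ?thesis using card_subset_eq[OF _ sub] by simp
qed

text \<open>A perfect matching is determined by all but one of its edges: the missing edge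
  consists of the uncovered vertices.\<close>
lemma perfect_matching_minus_edge_inj:
  assumes sg: "simple_graph V E" and cV: "card V = 2 * n"
    and A: "k_matching E n A" "a \<in> A" and B: "k_matching E n B" "b \<in> B"
    and eq: "A - {a} = B - {b}"
  shows "A = B"
proof -
  have rest: "x = V - \<Union>(M - {x})" if M: "k_matching E n M" and x: "x \<in> M" for M x
  proof -
    have "x \<inter> \<Union>(M - {x}) = {}" using M x unfolding k_matching_def matching_def by blast
    moreover have "x \<union> \<Union>(M - {x}) = V" using perfect_matching_covers[OF sg cV M] x by blast
    ultimately show ?thesis by blast
  qed
  have "a = b" using rest[OF A] rest[OF B] eq by simp
  then show ?thesis using eq A(2) B(2) by blast
qed

lemma k_matching_remove_edge:
  "k_matching E k M \<Longrightarrow> e \<in> M \<Longrightarrow> k_matching E (k - 1) (M - {e})"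
  unfolding k_matching_def matching_def by auto

section \<open>The excessive index via minimum covers\<close>

definition matching_cover :: "'a set set \<Rightarrow> nat \<Rightarrow> 'a set set set \<Rightarrow> bool" where
  "matching_cover E k S \<longleftrightarrow> finite S \<and> (\<forall>M\<in>S. k_matching E k M) \<and> \<Union>S = E"

lemma excessive_index_eq_enat_iff:
  assumes fin: "finite E"
  shows "excessive_index E k = enat t \<longleftrightarrow>
    (\<exists>S. matching_cover E k S \<and> card S = t) \<and> (\<forall>S. matching_cover E k S \<longrightarrow> t \<le> card S)"
proof -
  define P where "P = (\<lambda>t. \<exists>S. finite S \<and> card S = t \<and> (\<forall>M\<in>S. k_matching E k M) \<and> \<Union>S = E)"
  have P_iff: "P t \<longleftrightarrow> (\<exists>S. matching_cover E k S \<and> card S = t)" for t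
    unfolding P_def matching_cover_def by blast
  have cond_iff: "(\<forall>e\<in>E. \<exists>M. k_matching E k M \<and> e \<in> M) \<longleftrightarrow> (\<exists>t. P t)"
  proof
    assume cov: "\<forall>e\<in>E. \<exists>M. k_matching E k M \<and> e \<in> M"
    define choice where "choice e = (SOME M. k_matching E k M \<and> e \<in> M)" for e
    have choice: "k_matching E k (choice e) \<and> e \<in> choice e" if "e \<in> E" for e
      using cov that unfolding choice_def by (metis (mono_tags, lifting) someI_ex)
    have "\<Union>(choice ` E) = E"
      using choice unfolding k_matching_def matching_def by blast
    then have "matching_cover E k (choice ` E)"
      using choice fin unfolding matching_cover_def by blast
    then show "\<exists>t. P t" using P_iff by blast
  next
    assume "\<exists>t. P t"
    then obtain S where "\<forall>M\<in>S. k_matching E k M" "\<Union>S = E" unfolding P_def by blast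
    then show "\<forall>e\<in>E. \<exists>M. k_matching E k M \<and> e \<in> M" by blast
  qed
  have index: "excessive_index E k = (if \<exists>t. P t then enat (Least P) else \<infinity>)"
    unfolding excessive_index_def cond_iff P_def by (rule refl)
  show ?thesis
  proof
    assume "excessive_index E k = enat t"
    then have ex: "\<exists>t. P t" and t: "t = Least P" using index by (auto split: if_splits)
    have "P t" unfolding t using LeastI_ex[OF ex] .
    moreover have "t \<le> card S" if "matching_cover E k S" for S
      unfolding t using Least_le[of P "card S"] P_iff that by blast
    ultimately show "(\<exists>S. matching_cover E k S \<and> card S = t) \<and> (\<forall>S. matching_cover E k S \<longrightarrow> t \<le> card S)"
      using P_iff by blast
  next
    assume H: "(\<exists>S. matching_cover E k S \<and> card S = t) \<and> (\<forall>S. matching_cover E k S \<longrightarrow> t \<le> card S)"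
    have Pt: "P t" unfolding P_iff using H by blast
    have "t \<le> t'" if "P t'" for t' using that H unfolding P_iff by auto
    with Pt have "Least P = t" by (rule Least_equality)
    moreover have "\<exists>t. P t" using Pt by blast
    ultimately show "excessive_index E k = enat t" unfolding index by simp
  qed
qed

section \<open>Covers of cubic graphs\<close>

lemma vertex_meets_three_members:
  assumes fin: "finite E" and cub: "cubic V E" and v: "v \<in> V"
    and S: "\<forall>M\<in>S. matching E M" "\<Union>S = E"
  obtains T where "T \<subseteq> S" "card T = 3" "\<forall>M\<in>T. \<exists>e\<in>M. v \<in> e"
proof -
  let ?X = "{e\<in>E. v \<in> e}"
  have cX: "card ?X = 3" using cub v unfolding cubic_def degree_def by simp
  have "\<forall>e\<in>?X. \<exists>M\<in>S. e \<in> M" using S(2) by blast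
  then obtain g where g: "\<And>e. e \<in> ?X \<Longrightarrow> g e \<in> S \<and> e \<in> g e" by metis
  have inj: "inj_on g ?X"
  proof (rule inj_onI)
    fix e f assume e: "e \<in> ?X" and f: "f \<in> ?X" and gef: "g e = g f"
    have "matching E (g e)" using g[OF e] S(1) by blast
    moreover have "e \<in> g e" "f \<in> g e" using g[OF e] g[OF f] gef by auto
    moreover have "v \<in> e" "v \<in> f" using e f by auto
    ultimately show "e = f" by (rule matching_edge_unique)
  qed
  show ?thesis
  proof (rule that)
    show "g ` ?X \<subseteq> S" using g by blast
    show "card (g ` ?X) = 3" using card_image[OF inj] cX by simp
    show "\<forall>M\<in>g ` ?X. \<exists>e\<in>M. v \<in> e" using g by blast
  qed
qed

lemma cover_by_small_matchings_card:
  assumes sg: "simple_graph V E" and cub: "cubic V E" and cV: "card V = 2 * n"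
    and kn: "k < n" and S: "matching_cover E k S"
  shows "4 \<le> card S"
proof (rule ccontr)
  assume "\<not> 4 \<le> card S"
  then have small: "card S \<le> 3" by simp
  have fin: "finite E" using simple_graph_finite_edges[OF sg] .
  have fS: "finite S" and match: "\<forall>M\<in>S. matching E M" and cov: "\<Union>S = E"
    using S unfolding matching_cover_def k_matching_def by auto
  text \<open>With at most three members, each member meets every vertex.\<close>
  have meets: "\<exists>e\<in>M. v \<in> e" if v: "v \<in> V" and M: "M \<in> S" for v M
  proof -
    obtain T where T: "T \<subseteq> S" "card T = 3" "\<forall>M\<in>T. \<exists>e\<in>M. v \<in> e"
      using vertex_meets_three_members[OF fin cub v match cov] by blast
    have "card T = card S" using card_mono[OF fS T(1)] small T(2) by simp
    then have "T = S" by (rule card_subset_eq[OF fS T(1)])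
    then show ?thesis using T(3) M by blast
  qed
  have "V \<noteq> {}" using cV kn by auto
  then obtain v where v: "v \<in> V" by blast
  obtain T where "T \<subseteq> S" "card T = 3" "\<forall>M\<in>T. \<exists>e\<in>M. v \<in> e"
    using vertex_meets_three_members[OF fin cub v match cov] by blast
  then have "S \<noteq> {}" by auto
  then obtain M where M: "M \<in> S" by blast
  have kM: "k_matching E k M" using S M unfolding matching_cover_def by blast
  have "\<Union>M = V"
  proof
    show "\<Union>M \<subseteq> V"
      using kM simple_graph_edge_subset[OF sg] unfolding k_matching_def matching_def by blast
    show "V \<subseteq> \<Union>M" using meets[OF _ M] by blast
  qed
  moreover have "card (\<Union>M) = 2 * k"
    using card_Union_matching[OF sg] kM unfolding k_matching_def by auto
  ultimately show False using cV kn by simp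
qed

lemma complement_of_two_perfect_matchings:
  assumes sg: "simple_graph V E" and cub: "cubic V E" and cV: "card V = 2 * n"
    and A: "k_matching E n A" and B: "k_matching E n B" and AB: "A \<inter> B = {}"
  shows "k_matching E n (E - A - B)"
proof -
  let ?C = "E - A - B"
  have fin: "finite E" using simple_graph_finite_edges[OF sg] .
  have mA: "matching E A" and mB: "matching E B" using A B unfolding k_matching_def by auto
  text \<open>At each vertex the edges of A and B are two of the three edges, so exactly one
    edge of the complement remains.\<close>
  have one_edge: "\<exists>x. {e \<in> ?C. v \<in> e} = {x}" if v: "v \<in> V" for v
  proof -
    obtain a b where ab: "a \<in> A" "v \<in> a" "b \<in> B" "v \<in> b"
      using perfect_matching_covers[OF sg cV] A B v by blast
    have "e \<in> A \<longleftrightarrow> e = a" "e \<in> B \<longleftrightarrow> e = b" if "v \<in> e" for e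
      using matching_edge_unique[OF mA, of e a v] matching_edge_unique[OF mB, of e b v] that ab
      by auto
    then have at_v: "{e \<in> ?C. v \<in> e} = {e\<in>E. v \<in> e} - {a, b}" by auto
    have "a \<noteq> b" using ab AB by blast
    moreover have "{a, b} \<subseteq> {e\<in>E. v \<in> e}" using ab mA mB unfolding matching_def by blast
    moreover have "card {e\<in>E. v \<in> e} = 3" using cub v unfolding cubic_def degree_def by simp
    ultimately have "card {e \<in> ?C. v \<in> e} = 1" unfolding at_v by (simp add: card_Diff_subset)
    then show ?thesis by (meson card_1_singletonE)
  qed
  have mC: "matching E ?C" unfolding matching_def
  proof (intro conjI ballI impI)
    fix e f assume e: "e \<in> ?C" and f: "f \<in> ?C" and "e \<noteq> f"
    show "e \<inter> f = {}"
    proof (rule ccontr)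
      assume "e \<inter> f \<noteq> {}"
      then obtain v where v: "v \<in> e" "v \<in> f" by blast
      then have "v \<in> V" using simple_graph_edge_subset[OF sg] e by blast
      then obtain x where "{e \<in> ?C. v \<in> e} = {x}" using one_edge by blast
      then have "e = x" "f = x" using e f v unfolding set_eq_iff by blast+
      then show False using \<open>e \<noteq> f\<close> by simp
    qed
  qed blast
  have "\<Union>?C = V"
  proof
    show "\<Union>?C \<subseteq> V" using simple_graph_edge_subset[OF sg] by blast
    show "V \<subseteq> \<Union>?C"
    proof
      fix v assume "v \<in> V"
      then obtain x where "{e \<in> ?C. v \<in> e} = {x}" using one_edge by blast
      then have "x \<in> ?C" "v \<in> x" unfolding set_eq_iff by blast+
      then show "v \<in> \<Union>?C" by blast
    qed
  qed
  then have "2 * card ?C = 2 * n" using card_Union_matching[OF sg mC] fin cV by simp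
  then show ?thesis using mC fin unfolding k_matching_def by simp
qed

lemma perfect_matchings_meet:
  assumes sg: "simple_graph V E" and cub: "cubic V E" and cV: "card V = 2 * n"
    and min: "\<forall>S. matching_cover E n S \<longrightarrow> 4 \<le> card S"
    and A: "k_matching E n A" and B: "k_matching E n B"
  shows "A \<inter> B \<noteq> {}"
proof
  assume AB: "A \<inter> B = {}"
  let ?C = "E - A - B"
  have C: "k_matching E n ?C" using complement_of_two_perfect_matchings[OF sg cub cV A B AB] .
  have "matching_cover E n {A, B, ?C}"
    using A B C unfolding matching_cover_def k_matching_def matching_def by auto
  then have "4 \<le> card {A, B, ?C}" using min by blast
  moreover have "card {A, B, ?C} \<le> 3" by (simp add: card_insert_le_m1)
  ultimately show False by simp
qed

text \<open>In a cubic graph covered by matchings, no edge lies in every member: a second edge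
  at one of its endpoints belongs to some member.\<close>
lemma no_edge_in_all_members:
  assumes sg: "simple_graph V E" and cub: "cubic V E"
    and match: "\<forall>M\<in>S. matching E M" and cov: "\<Union>S = E" and e: "e \<in> E"
  shows "\<exists>M\<in>S. e \<notin> M"
proof -
  obtain u w where uw: "u \<in> V" "e = {u, w}" by (rule simple_graph_edgeE[OF sg e])
  have "card {f\<in>E. u \<in> f} = 3" using cub uw(1) unfolding cubic_def degree_def by simp
  moreover have "card {f\<in>E. u \<in> f} \<le> 1" if "{f\<in>E. u \<in> f} \<subseteq> {e}"
    using card_mono[OF _ that] by simp
  ultimately have "\<not> {f\<in>E. u \<in> f} \<subseteq> {e}" by auto
  then obtain f where f: "f \<in> E" "u \<in> f" "f \<noteq> e" by blast
  then obtain M where "M \<in> S" "f \<in> M" using cov by blast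
  then show ?thesis using matching_edge_unique[of E M e f u] match f uw by auto
qed

lemma shifted_cover:
  assumes sg: "simple_graph V E" and cub: "cubic V E" and cV: "card V = 2 * n"
    and M: "\<forall>M\<in>{M1, M2, M3, M4}. k_matching E n M" "\<Union>{M1, M2, M3, M4} = E"
    and distinct: "distinct [M1, M2, M3, M4]"
    and e: "e1 \<in> M1 \<inter> M2" "e2 \<in> M2 \<inter> M3" "e3 \<in> M3 \<inter> M4" "e4 \<in> M4 \<inter> M1"
  defines "S \<equiv> {M1 - {e1}, M2 - {e2}, M3 - {e3}, M4 - {e4}}"
  shows "matching_cover E (n - 1) S" and "card S = 4"
proof -
  let ?Ms = "{M1, M2, M3, M4}"
  have match: "\<forall>M\<in>?Ms. matching E M" using M(1) unfolding k_matching_def by blast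
  text \<open>An edge missed by S would, going around the cycle, lie in all four matchings.\<close>
  have "E \<subseteq> \<Union>S"
  proof
    fix f assume f: "f \<in> E"
    show "f \<in> \<Union>S"
    proof (rule ccontr)
      assume "f \<notin> \<Union>S"
      then have "f \<in> M1 \<longrightarrow> f \<in> M2" "f \<in> M2 \<longrightarrow> f \<in> M3" "f \<in> M3 \<longrightarrow> f \<in> M4" "f \<in> M4 \<longrightarrow> f \<in> M1"
        using e unfolding S_def by auto
      moreover have "f \<in> M1 \<or> f \<in> M2 \<or> f \<in> M3 \<or> f \<in> M4" using M(2) f by blast
      ultimately have "\<forall>M\<in>?Ms. f \<in> M" by blast
      then show False using no_edge_in_all_members[OF sg cub match M(2) f] by blast
    qed
  qed
  moreover have "\<Union>S \<subseteq> E" using M(2) unfolding S_def by blast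
  moreover have "\<forall>N\<in>S. k_matching E (n - 1) N"
    using M(1) e k_matching_remove_edge unfolding S_def by blast
  ultimately show "matching_cover E (n - 1) S" unfolding matching_cover_def S_def by blast
  have differ: "M - {x} \<noteq> M' - {y}"
    if "M \<in> ?Ms" "x \<in> M" "M' \<in> ?Ms" "y \<in> M'" "M \<noteq> M'" for M M' x y
    using perfect_matching_minus_edge_inj[OF sg cV, of M x M' y] M(1) that by blast
  have "distinct [M1 - {e1}, M2 - {e2}, M3 - {e3}, M4 - {e4}]"
    using distinct e by (simp add: differ)
  then show "card S = 4" unfolding S_def using distinct_card by fastforce
qed

theorem mainTheorem7:
  fixes V :: "'a set" and E :: "'a set set" and n :: nat
  assumes "simple_graph V E" and "connected_graph V E" and "cubic V E"
    and "card V = 2 * n"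
    and "excessive_index E n = 4"
  shows "excessive_index E (n - 1) = 4"
proof -
  note sg = assms(1) and cub = assms(3) and cV = assms(4)
  have fin: "finite E" using simple_graph_finite_edges[OF sg] .
  obtain S where S: "matching_cover E n S" "card S = 4"
    and min: "\<forall>S. matching_cover E n S \<longrightarrow> 4 \<le> card S"
    using assms(5) excessive_index_eq_enat_iff[OF fin] by (auto simp: numeral_eq_enat)
  obtain M1 M2 M3 M4 where S_eq: "S = {M1, M2, M3, M4}" and distinct: "distinct [M1, M2, M3, M4]"
    using S(2) by (auto simp: card_Suc_eq numeral_eq_Suc)
  have Ms: "\<forall>M\<in>{M1, M2, M3, M4}. k_matching E n M" "\<Union>{M1, M2, M3, M4} = E"
    using S(1) unfolding S_eq matching_cover_def by auto
  text \<open>Four distinct [n]-matchings cannot all be empty.\<close>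
  have "n \<ge> 1"
    using Ms distinct by (cases n) (auto simp: k_matching_def)
  have "M \<inter> M' \<noteq> {}" if "M \<in> {M1, M2, M3, M4}" "M' \<in> {M1, M2, M3, M4}" for M M'
    using perfect_matchings_meet[OF sg cub cV min] Ms(1) that by blast
  then obtain e1 e2 e3 e4 where
    "e1 \<in> M1 \<inter> M2" "e2 \<in> M2 \<inter> M3" "e3 \<in> M3 \<inter> M4" "e4 \<in> M4 \<inter> M1" by (meson ex_in_conv insertCI)
  from shifted_cover[OF sg cub cV Ms distinct this] obtain S' where
    cover: "matching_cover E (n - 1) S'" "card S' = 4" by blast
  have "n - 1 < n" using \<open>n \<ge> 1\<close> by simp
  then have "\<forall>S. matching_cover E (n - 1) S \<longrightarrow> 4 \<le> card S"
    using cover_by_small_matchings_card[OF sg cub cV] by blast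
  then show ?thesis
    using cover excessive_index_eq_enat_iff[OF fin] by (auto simp: numeral_eq_enat)
qed

end
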